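(* Let $t=\alpha^\mu\beta^\nu$ with $\mu\in\mathbb{Z}_{\ge0}^m$, $\nu\in\mathbb{Z}_{\ge0}^n$. If $t$ has a res-representation, then $t$ has a syl-representation. Moreover, if $\nu$ is non-increasing and $\mathcal{R}$ is a res-representation of $t$, then $(\mathcal{R},F_{\bar c})$ is a syl-representation of $t$, where $c=cs(\mathcal{R})$, $\bar c_j=m-c_j$, and $F_{\bar c}$ is the bottom-left flushed $m\times n$ matrix with column sums $\bar c$.
   Context: For $M\in\{0,1\}^{m\times n}$: $\bar M_{ij}=1-M_{ij}$; $rs(M)=(\sum_j M_{ij})_i$; $cs(M)=(\sum_i M_{ij})_j$; $ars(M)=(i+\sum_j M_{ij})_{i=1..m}$; $acs(M)=(j+\sum_i M_{ij})_{j=1..n}$. $M$ is bottom-left flushed if whenever $M_{ij}=1$, also $M_{i'j'}=1$ for all $i'\ge i$, $j'\le j$. A res-representation of $\alpha^\mu\beta^\nu$ is $\mathcal{R}\in\{0,1\}^{m\times n}$ with $rs(\mathcal{R})=\mu$ and $cs(\bar{\mathcal{R}})=\nu$. $PC(A,B)$ means $\{acs(A)_1,\dots,acs(A)_n,ars(B)_1,\dots,ars(B)_m\}=\{1,\dots,m+n\}$. A syl-representation of $\alpha^\mu\beta^\nu$ is a pair $(\mathcal{S}_1,\mathcal{S}_2)$ in $\{0,1\}^{m\times n}$ with $rs(\mathcal{S}_1)=\mu$, $cs(\mathcal{S}_2)=\nu$, $PC(\mathcal{S}_1,\mathcal{S}_2)$. *)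

theory Defs
  imports Main
begin

text \<open>An m x n 0/1-matrix is a function M :: nat => nat => nat whose entries at
  rows 1..m and columns 1..n lie in {0,1}; entries outside this range are ignored.
  Vectors mu (length m) and nu (length n) are functions nat => nat, indexed from 1.\<close>

definition is01 :: "nat \<Rightarrow> nat \<Rightarrow> (nat \<Rightarrow> nat \<Rightarrow> nat) \<Rightarrow> bool" where
  "is01 m n M \<longleftrightarrow> (\<forall>i\<in>{1..m}. \<forall>j\<in>{1..n}. M i j \<in> {0, 1})"

definition mbar :: "(nat \<Rightarrow> nat \<Rightarrow> nat) \<Rightarrow> nat \<Rightarrow> nat \<Rightarrow> nat" where
  "mbar M i j = 1 - M i j"

definition rs :: "nat \<Rightarrow> (nat \<Rightarrow> nat \<Rightarrow> nat) \<Rightarrow> nat \<Rightarrow> nat" where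
  "rs n M i = (\<Sum>j=1..n. M i j)"

definition cs :: "nat \<Rightarrow> (nat \<Rightarrow> nat \<Rightarrow> nat) \<Rightarrow> nat \<Rightarrow> nat" where
  "cs m M j = (\<Sum>i=1..m. M i j)"

definition ars :: "nat \<Rightarrow> (nat \<Rightarrow> nat \<Rightarrow> nat) \<Rightarrow> nat \<Rightarrow> nat" where
  "ars n M i = i + rs n M i"

definition acs :: "nat \<Rightarrow> (nat \<Rightarrow> nat \<Rightarrow> nat) \<Rightarrow> nat \<Rightarrow> nat" where
  "acs m M j = j + cs m M j"

definition bottom_left_flushed :: "nat \<Rightarrow> nat \<Rightarrow> (nat \<Rightarrow> nat \<Rightarrow> nat) \<Rightarrow> bool" where
  "bottom_left_flushed m n M \<longleftrightarrow>
     (\<forall>i\<in>{1..m}. \<forall>j\<in>{1..n}. M i j = 1 \<longrightarrow>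
        (\<forall>i'\<in>{i..m}. \<forall>j'\<in>{1..j}. M i' j' = 1))"

definition PC :: "nat \<Rightarrow> nat \<Rightarrow> (nat \<Rightarrow> nat \<Rightarrow> nat) \<Rightarrow> (nat \<Rightarrow> nat \<Rightarrow> nat) \<Rightarrow> bool" where
  "PC m n A B \<longleftrightarrow> (acs m A ` {1..n}) \<union> (ars n B ` {1..m}) = {1..m+n}"

definition res_rep :: "nat \<Rightarrow> nat \<Rightarrow> (nat \<Rightarrow> nat) \<Rightarrow> (nat \<Rightarrow> nat) \<Rightarrow> (nat \<Rightarrow> nat \<Rightarrow> nat) \<Rightarrow> bool" where
  "res_rep m n mu nu R \<longleftrightarrow> is01 m n R \<and>
     (\<forall>i\<in>{1..m}. rs n R i = mu i) \<and> (\<forall>j\<in>{1..n}. cs m (mbar R) j = nu j)"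

definition syl_rep :: "nat \<Rightarrow> nat \<Rightarrow> (nat \<Rightarrow> nat) \<Rightarrow> (nat \<Rightarrow> nat)
    \<Rightarrow> (nat \<Rightarrow> nat \<Rightarrow> nat) \<Rightarrow> (nat \<Rightarrow> nat \<Rightarrow> nat) \<Rightarrow> bool" where
  "syl_rep m n mu nu S1 S2 \<longleftrightarrow> is01 m n S1 \<and> is01 m n S2 \<and>
     (\<forall>i\<in>{1..m}. rs n S1 i = mu i) \<and> (\<forall>j\<in>{1..n}. cs m S2 j = nu j) \<and> PC m n S1 S2"

end

theory Submission
  imports Defs
begin

text \<open>Let \<open>\<nu>\<close> be non-increasing with values at most \<open>m\<close>, and let \<open>F\<close> be the bottom-left flushed
  matrix with column sums \<open>\<nu>\<close>, so that \<open>F i j = 1\<close> exactly when \<open>m < \<nu> j + i\<close>. Row \<open>i\<close> of \<open>F\<close>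
  is then an initial segment of length \<open>r i\<close>, and the numbers \<open>j + (m - \<nu> j)\<close> and \<open>i + r i\<close> are
  strictly increasing in \<open>j\<close> resp. \<open>i\<close> and never meet: \<open>F i j = 1\<close> forces \<open>i + r i \<ge> i + j >
  j + m - \<nu> j\<close>, and \<open>F i j = 0\<close> forces \<open>i + r i \<le> i + j - 1 < j + m - \<nu> j\<close>. Counting, they fill
  \<open>{1..m+n}\<close>. For a res-representation \<open>R\<close> we have \<open>cs R j = m - \<nu> j\<close>, so \<open>acs R\<close> is the first
  family and \<open>ars F\<close> the second, which is the PC condition. For arbitrary \<open>\<nu>\<close> one permutes the
  columns of \<open>R\<close> so that its column sums become monotone and pairs it with the staircase matrix
  of \<open>\<nu>\<close> itself: row sums do not see the order of the columns.\<close>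

lemma sum_01_eq_card:
  fixes f :: "'a \<Rightarrow> nat"
  assumes "finite A" and "\<forall>x\<in>A. f x \<in> {0, 1}"
  shows "sum f A = card {x\<in>A. f x = 1}"
proof -
  have "sum f A = (\<Sum>x\<in>A. if f x = 1 then 1 else 0)"
    using assms(2) by (intro sum.cong) auto
  also have "\<dots> = card (A \<inter> {x. f x = 1})"
    using assms(1) by (simp add: sum.If_cases)
  finally show ?thesis
    by (simp add: Collect_conj_eq)
qed

lemma rs_eq_card:
  assumes "is01 m n M" and "i \<in> {1..m}"
  shows "rs n M i = card {j\<in>{1..n}. M i j = 1}"
  using assms unfolding rs_def is01_def by (intro sum_01_eq_card) auto

lemma cs_eq_card:
  assumes "is01 m n M" and "j \<in> {1..n}"
  shows "cs m M j = card {i\<in>{1..m}. M i j = 1}"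
  using assms unfolding cs_def is01_def by (intro sum_01_eq_card) auto

lemma cs_add_cs_mbar:
  assumes "is01 m n R" and "j \<in> {1..n}"
  shows "cs m R j + cs m (mbar R) j = m"
proof -
  have "cs m R j + cs m (mbar R) j = (\<Sum>i=1..m. R i j + mbar R i j)"
    unfolding cs_def by (simp add: sum.distrib)
  also have "\<dots> = (\<Sum>i=1..m. 1)"
  proof (rule sum.cong)
    fix i assume "i \<in> {1..m}"
    then have "R i j \<in> {0, 1}"
      using assms unfolding is01_def by blast
    then show "R i j + mbar R i j = 1"
      unfolding mbar_def by auto
  qed simp
  finally show ?thesis by simp
qed

lemma res_rep_cs_add:
  assumes "res_rep m n mu nu R" and "j \<in> {1..n}"
  shows "cs m R j + nu j = m"
  using assms cs_add_cs_mbar[of m n R j] unfolding res_rep_def by auto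

lemma rs_permute_columns:
  assumes "bij_betw \<sigma> {1..n} {1..n}"
  shows "rs n (\<lambda>i j. M i (\<sigma> j)) i = rs n M i"
  unfolding rs_def using sum.reindex_bij_betw[OF assms, of "M i"] by simp

lemma card_staircase_column:
  fixes k m :: nat
  assumes "k \<le> m"
  shows "card {i\<in>{1..m}. m < k + i} = k"
proof -
  have "{i\<in>{1..m}. m < k + i} = {m + 1 - k..m}"
    using assms by auto
  then show ?thesis
    using assms by simp
qed

lemma flushed_column_upward_closed:
  assumes "bottom_left_flushed m n F" and "j \<in> {1..n}" and "i \<in> {1..m}"
    and "F i j = 1" and "k \<in> {i..m}"
  shows "F k j = 1"
  using assms unfolding bottom_left_flushed_def by (meson atLeastAtMost_iff order_refl)

lemma flushed_entry_iff:
  assumes F01: "is01 m n F" and flushed: "bottom_left_flushed m n F"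
    and i: "i \<in> {1..m}" and j: "j \<in> {1..n}"
  shows "F i j = 1 \<longleftrightarrow> m < cs m F j + i"
proof -
  let ?C = "{k\<in>{1..m}. F k j = 1}"
  have cs: "cs m F j = card ?C"
    using cs_eq_card[OF F01 j] .
  show ?thesis
  proof
    assume "F i j = 1"
    then have "{i..m} \<subseteq> ?C"
      using flushed_column_upward_closed[OF flushed j i] i by auto
    then have "card {i..m} \<le> card ?C"
      by (intro card_mono) auto
    then show "m < cs m F j + i"
      using cs i by auto
  next
    assume less: "m < cs m F j + i"
    show "F i j = 1"
    proof (rule ccontr)
      assume not_one: "F i j \<noteq> 1"
      have "?C \<subseteq> {i + 1..m}"
      proof
        fix k assume "k \<in> ?C"
        then have "k \<in> {1..m}" and "F k j = 1" by auto
        with not_one have "\<not> k \<le> i"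
          using flushed_column_upward_closed[OF flushed j, of k i] i by auto
        with \<open>k \<in> {1..m}\<close> show "k \<in> {i + 1..m}" by auto
      qed
      then have "card ?C \<le> m - i"
        using card_mono[of "{i + 1..m}" ?C] by auto
      then show False
        using less cs i by auto
    qed
  qed
qed

lemma antitone_interlacing:
  fixes nu :: "nat \<Rightarrow> nat"
  assumes anti: "antimono_on {1..n} nu" and bound: "\<forall>j\<in>{1..n}. nu j \<le> m"
  defines "r i \<equiv> card {j\<in>{1..n}. m < nu j + i}"
  shows "(\<lambda>j. j + (m - nu j)) ` {1..n} \<union> (\<lambda>i. i + r i) ` {1..m} = {1..m + n}"
    (is "?A \<union> ?B = _")
proof -
  have anti': "nu j' \<le> nu j" if "j \<in> {1..n}" "j' \<in> {1..n}" "j \<le> j'" for j j'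
    using anti that by (simp add: monotone_on_def)
  have r_le: "r i \<le> n" for i
  proof -
    have "r i \<le> card {1..n}"
      unfolding r_def by (intro card_mono) auto
    then show ?thesis by simp
  qed
  have r_mono: "r i \<le> r i'" if "i \<le> i'" for i i'
    unfolding r_def using that by (intro card_mono) auto
  have inj_A: "inj_on (\<lambda>j. j + (m - nu j)) {1..n}"
  proof (rule linorder_inj_onI)
    fix j j' assume "j < j'" "j \<in> {1..n}" "j' \<in> {1..n}"
    moreover from this have "nu j' \<le> nu j" "nu j \<le> m"
      using anti' bound by auto
    ultimately show "j + (m - nu j) \<noteq> j' + (m - nu j')"
      by arith
  qed auto
  have inj_B: "inj_on (\<lambda>i. i + r i) {1..m}"
  proof (rule linorder_inj_onI)
    fix i i' :: nat assume "i < i'"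
    then show "i + r i \<noteq> i' + r i'"
      using r_mono[of i i'] by linarith
  qed auto
  have disjoint: "j + (m - nu j) \<noteq> i + r i" if j: "j \<in> {1..n}" for i j
  proof (cases "m < nu j + i")
    case True
    have "{1..j} \<subseteq> {j'\<in>{1..n}. m < nu j' + i}"
    proof
      fix k assume "k \<in> {1..j}"
      with j have "k \<in> {1..n}" and "nu j \<le> nu k"
        using anti'[of k j] by auto
      with True show "k \<in> {j'\<in>{1..n}. m < nu j' + i}" by auto
    qed
    then have "j \<le> r i"
      unfolding r_def using card_mono[of "{j'\<in>{1..n}. m < nu j' + i}" "{1..j}"] by simp
    then show ?thesis
      using True bound j by auto
  next
    case False
    have "{j'\<in>{1..n}. m < nu j' + i} \<subseteq> {1..<j}"
    proof
      fix k assume k: "k \<in> {j'\<in>{1..n}. m < nu j' + i}"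
      have "\<not> j \<le> k"
        using anti'[OF j, of k] k False by auto
      with k show "k \<in> {1..<j}" by auto
    qed
    then have "r i \<le> j - 1"
      unfolding r_def using card_mono[of "{1..<j}"] by fastforce
    then show ?thesis
      using False j by auto
  qed
  have "j + (m - nu j) \<in> {1..m + n}" if "j \<in> {1..n}" for j
    using that bound[rule_format, OF that] by auto
  moreover have "i + r i \<in> {1..m + n}" if "i \<in> {1..m}" for i
    using that r_le[of i] by auto
  ultimately have sub: "?A \<union> ?B \<subseteq> {1..m + n}"
    by blast
  have "card (?A \<union> ?B) = card ?A + card ?B"
    by (rule card_Un_disjoint) (use disjoint in auto)
  also have "\<dots> = card {1..m + n}"
    using card_image[OF inj_A] card_image[OF inj_B] by simp
  finally show ?thesis
    using card_subset_eq[OF _ sub] by simp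
qed

lemma PC_of_antitone:
  fixes nu :: "nat \<Rightarrow> nat"
  assumes "antimono_on {1..n} nu"
    and cs_A: "\<forall>j\<in>{1..n}. cs m A j + nu j = m"
    and rs_B: "\<forall>i\<in>{1..m}. rs n B i = card {j\<in>{1..n}. m < nu j + i}"
  shows "PC m n A B"
proof -
  have "acs m A ` {1..n} = (\<lambda>j. j + (m - nu j)) ` {1..n}"
    using cs_A by (intro image_cong) (fastforce simp: acs_def)+
  moreover have "ars n B ` {1..m} = (\<lambda>i. i + card {j\<in>{1..n}. m < nu j + i}) ` {1..m}"
    using rs_B by (intro image_cong) (auto simp: ars_def)
  moreover have "\<forall>j\<in>{1..n}. nu j \<le> m"
    using cs_A by (metis le_add2)
  ultimately show ?thesis
    unfolding PC_def using antitone_interlacing[OF assms(1)] by simp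
qed

lemma syl_rep_of_flushed:
  assumes anti: "antimono_on {1..n} nu" and R: "res_rep m n mu nu R"
    and F01: "is01 m n F" and flushed: "bottom_left_flushed m n F"
    and cs_F: "\<forall>j\<in>{1..n}. cs m F j = m - cs m R j"
  shows "syl_rep m n mu nu R F"
proof -
  have cs_R: "\<forall>j\<in>{1..n}. cs m R j + nu j = m"
    using res_rep_cs_add[OF R] by blast
  then have cs_F_nu: "\<forall>j\<in>{1..n}. cs m F j = nu j"
    using cs_F by (metis add_diff_cancel_left')
  have "rs n F i = card {j\<in>{1..n}. m < nu j + i}" if "i \<in> {1..m}" for i
    unfolding rs_eq_card[OF F01 that]
    using flushed_entry_iff[OF F01 flushed that] cs_F_nu by (intro arg_cong[where f=card]) auto
  then have "PC m n R F"
    using PC_of_antitone[OF anti cs_R] by blast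
  then show ?thesis
    using R F01 cs_F_nu unfolding syl_rep_def res_rep_def by blast
qed

lemma exists_antitone_rearrangement:
  fixes f :: "nat \<Rightarrow> 'a::linorder"
  shows "\<exists>\<sigma>. bij_betw \<sigma> {1..n} {1..n} \<and> antimono_on {1..n} (f \<circ> \<sigma>)"
proof -
  define xs where "xs = rev (sort_key f [1..<Suc n])"
  have len: "length xs = n" and set: "set xs = {1..n}" and "distinct xs"
    unfolding xs_def by auto
  have "sorted (map f (sort_key f [1..<Suc n]))"
    by (rule sorted_sort_key)
  then have sorted: "sorted_wrt (\<ge>) (map f xs)"
    unfolding xs_def by (simp add: rev_map[symmetric] sorted_wrt_rev del: upt_Suc)
  define \<sigma> where "\<sigma> j = xs ! (j - 1)" for j
  have "bij_betw (\<lambda>j. j - 1) {1..n} {..<n}"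
    by (rule bij_betw_byWitness[where f'=Suc]) auto
  moreover have "bij_betw ((!) xs) {..<n} {1..n}"
    using bij_betw_nth[OF \<open>distinct xs\<close>] len set by auto
  ultimately have "bij_betw \<sigma> {1..n} {1..n}"
    unfolding \<sigma>_def using bij_betw_trans by (fastforce simp: comp_def)
  moreover have "antimono_on {1..n} (f \<circ> \<sigma>)"
  proof (rule monotone_onI)
    fix j j' assume "j \<in> {1..n}" "j' \<in> {1..n}" "j \<le> j'"
    then show "(f \<circ> \<sigma>) j' \<le> (f \<circ> \<sigma>) j"
      using sorted_wrt_nth_less[OF sorted, of "j - 1" "j' - 1"] len
      by (cases "j = j'") (auto simp: \<sigma>_def)
  qed
  ultimately show ?thesis by blast
qed

lemma syl_rep_of_res_rep:
  assumes R: "res_rep m n mu nu R"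
  shows "\<exists>S1 S2. syl_rep m n mu nu S1 S2"
proof -
  obtain \<sigma> where \<sigma>: "bij_betw \<sigma> {1..n} {1..n}" and anti: "antimono_on {1..n} (nu \<circ> \<sigma>)"
    using exists_antitone_rearrangement by blast
  define S1 where "S1 i j = R i (\<sigma> j)" for i j
  define S2 where "S2 i j = (if m < nu j + i then 1 else 0 :: nat)" for i j
  have cs_R: "\<forall>j\<in>{1..n}. cs m R j + nu j = m"
    using res_rep_cs_add[OF R] by blast
  have S1_01: "is01 m n S1" and S2_01: "is01 m n S2"
    using R bij_betwE[OF \<sigma>] unfolding res_rep_def is01_def S1_def S2_def by auto
  have rs_S1: "rs n S1 i = rs n R i" for i
    unfolding S1_def using rs_permute_columns[OF \<sigma>] .
  have cs_S1: "\<forall>j\<in>{1..n}. cs m S1 j + (nu \<circ> \<sigma>) j = m"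
    using cs_R bij_betwE[OF \<sigma>] unfolding cs_def S1_def by auto
  have cs_S2: "\<forall>j\<in>{1..n}. cs m S2 j = nu j"
  proof
    fix j assume j: "j \<in> {1..n}"
    then have "nu j \<le> m"
      using cs_R by (metis le_add2)
    moreover have "{i\<in>{1..m}. S2 i j = 1} = {i\<in>{1..m}. m < nu j + i}"
      by (auto simp: S2_def)
    ultimately show "cs m S2 j = nu j"
      using cs_eq_card[OF S2_01 j] card_staircase_column by simp
  qed
  have "rs n S2 i = card {j\<in>{1..n}. m < (nu \<circ> \<sigma>) j + i}" for i
  proof -
    have "rs n S2 i = rs n (\<lambda>i j. S2 i (\<sigma> j)) i"
      using rs_permute_columns[OF \<sigma>] by simp
    also have "\<dots> = card {j\<in>{1..n}. m < (nu \<circ> \<sigma>) j + i}"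
      unfolding rs_def S2_def by (simp add: sum.If_cases Int_def)
    finally show ?thesis .
  qed
  then have "PC m n S1 S2"
    using PC_of_antitone[OF anti cs_S1] by blast
  then have "syl_rep m n mu nu S1 S2"
    using R S1_01 S2_01 rs_S1 cs_S2 unfolding syl_rep_def res_rep_def by simp
  then show ?thesis by blast
qed

theorem mainTheorem9:
  fixes m n :: nat and mu nu :: "nat \<Rightarrow> nat"
  shows "((\<exists>R. res_rep m n mu nu R) \<longrightarrow> (\<exists>S1 S2. syl_rep m n mu nu S1 S2))
    \<and> (\<forall>R F. (\<forall>j\<in>{1..n}. \<forall>j'\<in>{1..n}. j \<le> j' \<longrightarrow> nu j' \<le> nu j)
          \<and> res_rep m n mu nu R
          \<and> is01 m n F \<and> bottom_left_flushed m n F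
          \<and> (\<forall>j\<in>{1..n}. cs m F j = m - cs m R j)
        \<longrightarrow> syl_rep m n mu nu R F)"
proof (intro conjI allI impI)
  show "\<exists>S1 S2. syl_rep m n mu nu S1 S2" if "\<exists>R. res_rep m n mu nu R"
    using that syl_rep_of_res_rep by blast
next
  fix R F
  assume "(\<forall>j\<in>{1..n}. \<forall>j'\<in>{1..n}. j \<le> j' \<longrightarrow> nu j' \<le> nu j)
          \<and> res_rep m n mu nu R
          \<and> is01 m n F \<and> bottom_left_flushed m n F
          \<and> (\<forall>j\<in>{1..n}. cs m F j = m - cs m R j)"
  then show "syl_rep m n mu nu R F"
    using syl_rep_of_flushed[of n nu m mu R F] by (auto simp: monotone_on_def)
qed

end
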